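(* Let $\Pi$ be an $\mathit{LP}^{\mathit{MLN}}$ program such that every formula in $\mathrm{soft}(\Pi)$ is a soft integrity constraint, i.e. has the form $w : \neg F$ for a real number $w$ and a propositional formula $F$. Then $\mathrm{SSM}'(\Pi) = \mathrm{SM}(\overline{\mathrm{hard}(\Pi)})$.
   Context: Fix a finite set of propositional atoms; an interpretation is a set $X$ of atoms. For a set $\Gamma$ of propositional formulas, the reduct $\Gamma^X$ is obtained by replacing every maximal subformula of each formula of $\Gamma$ not satisfied by $X$ by $\bot$; $X$ is a stable model of $\Gamma$ if $X$ is a minimal (w.r.t. set inclusion) model of $\Gamma^X$ (general stable model semantics of Ferraris). $\mathrm{SM}(\Gamma)$ denotes the set of stable models of $\Gamma$. An $\mathit{LP}^{\mathit{MLN}}$ program $\Pi$ is a finite set of weighted formulas $w : F$, where $F$ is a propositional formula and $w$ is either a real number (the formula is then called soft) or the symbol $\alpha$ denoting infinite weight (the formula is then called hard). $\mathrm{soft}(\Pi)$ and $\mathrm{hard}(\Pi)$ denote the sets of soft and hard weighted formulas of $\Pi$. For a set $\Sigma$ of weighted formulas, $\overline{\Sigma}$ denotes the set of formulas obtained by dropping the weights, and $\Sigma_X$ denotes the set of those $w : F \in \Sigma$ with $X \models F$. $\mathrm{SSM}'(\Pi)$ is the set of interpretations $X$ such that $X$ is a stable model of $\overline{\Pi_X}$ and $X$ satisfies $\overline{\mathrm{hard}(\Pi)}$. *)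

theory Defs
  imports Complex_Main
begin

text \<open>Propositional formulas over atoms of type 'a (Ferraris' syntax: bottom and the
binary connectives; negation is F implies bottom).\<close>

datatype 'a formula =
    Bot
  | Atom 'a
  | And "'a formula" "'a formula"
  | Or "'a formula" "'a formula"
  | Imp "'a formula" "'a formula"

definition Neg :: "'a formula \<Rightarrow> 'a formula" where
  "Neg F = Imp F Bot"

fun sat :: "'a set \<Rightarrow> 'a formula \<Rightarrow> bool" where
  "sat X Bot = False"
| "sat X (Atom p) = (p \<in> X)"
| "sat X (And F G) = (sat X F \<and> sat X G)"
| "sat X (Or F G) = (sat X F \<or> sat X G)"
| "sat X (Imp F G) = (sat X F \<longrightarrow> sat X G)"

definition models :: "'a set \<Rightarrow> 'a formula set \<Rightarrow> bool" where
  "models X \<Gamma> = (\<forall>F\<in>\<Gamma>. sat X F)"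

text \<open>Reduct F^X: every maximal subformula not satisfied by X is replaced by bottom.\<close>
fun reduct :: "'a set \<Rightarrow> 'a formula \<Rightarrow> 'a formula" where
  "reduct X Bot = Bot"
| "reduct X (Atom p) = (if p \<in> X then Atom p else Bot)"
| "reduct X (And F G) = (if sat X (And F G) then And (reduct X F) (reduct X G) else Bot)"
| "reduct X (Or F G) = (if sat X (Or F G) then Or (reduct X F) (reduct X G) else Bot)"
| "reduct X (Imp F G) = (if sat X (Imp F G) then Imp (reduct X F) (reduct X G) else Bot)"

definition reduct_set :: "'a set \<Rightarrow> 'a formula set \<Rightarrow> 'a formula set" where
  "reduct_set X \<Gamma> = reduct X ` \<Gamma>"

definition stable_model :: "'a set \<Rightarrow> 'a formula set \<Rightarrow> bool" where
  "stable_model X \<Gamma> = (models X (reduct_set X \<Gamma>) \<and>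
     (\<forall>Y. Y \<subset> X \<longrightarrow> \<not> models Y (reduct_set X \<Gamma>)))"

definition SM :: "'a formula set \<Rightarrow> 'a set set" where
  "SM \<Gamma> = {X. stable_model X \<Gamma>}"

datatype weight = Soft real | Alpha

type_synonym 'a lpmln = "(weight \<times> 'a formula) set"

definition soft :: "'a lpmln \<Rightarrow> 'a lpmln" where
  "soft \<Pi> = {(w, F) \<in> \<Pi>. w \<noteq> Alpha}"

definition hard :: "'a lpmln \<Rightarrow> 'a lpmln" where
  "hard \<Pi> = {(w, F) \<in> \<Pi>. w = Alpha}"

definition unweight :: "'a lpmln \<Rightarrow> 'a formula set" where
  "unweight \<Sigma> = snd ` \<Sigma>"

definition sat_part :: "'a lpmln \<Rightarrow> 'a set \<Rightarrow> 'a lpmln" where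
  "sat_part \<Sigma> X = {(w, F) \<in> \<Sigma>. sat X F}"

definition SSM' :: "'a lpmln \<Rightarrow> 'a set set" where
  "SSM' \<Pi> = {X. stable_model X (unweight (sat_part \<Pi> X)) \<and> models X (unweight (hard \<Pi>))}"

end

theory Submission
  imports Defs
begin

text \<open>If X satisfies \<not>G, the reduct of \<not>G with respect to X is \<not>\<bottom>, a tautology; so
the soft integrity constraints satisfied by X impose no condition on the subsets of X
and do not affect minimality. Once X satisfies the hard formulas, the reduct of
the formulas of \<Pi> satisfied by X is therefore equivalent to the reduct of hard(\<Pi>).\<close>

lemma sat_reduct: "sat X (reduct X F) \<longleftrightarrow> sat X F"
  by (induction F) auto

lemma reduct_eq_Bot_if_not_sat: "\<not> sat X F \<Longrightarrow> reduct X F = Bot"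
  by (cases F) auto

lemma reduct_Neg_if_sat: "sat X (Neg G) \<Longrightarrow> reduct X (Neg G) = Neg Bot"
  by (simp add: Neg_def reduct_eq_Bot_if_not_sat)

lemma models_Un: "models Y (\<Gamma> \<union> \<Delta>) \<longleftrightarrow> models Y \<Gamma> \<and> models Y \<Delta>"
  unfolding models_def by blast

lemma reduct_set_Un: "reduct_set X (\<Gamma> \<union> \<Delta>) = reduct_set X \<Gamma> \<union> reduct_set X \<Delta>"
  unfolding reduct_set_def by (rule image_Un)

lemma models_reduct_set: "models X (reduct_set X \<Gamma>) \<longleftrightarrow> models X \<Gamma>"
  unfolding models_def reduct_set_def by (simp add: sat_reduct)

lemma stable_model_imp_models: "stable_model X \<Gamma> \<Longrightarrow> models X \<Gamma>"
  unfolding stable_model_def by (simp add: models_reduct_set)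

lemma stable_model_Un_valid_reducts:
  assumes "\<forall>F \<in> \<Delta>. \<forall>Y. sat Y (reduct X F)"
  shows "stable_model X (\<Gamma> \<union> \<Delta>) \<longleftrightarrow> stable_model X \<Gamma>"
proof -
  have "models Y (reduct_set X \<Delta>)" for Y
    using assms unfolding models_def reduct_set_def by blast
  then show ?thesis
    unfolding stable_model_def by (simp add: reduct_set_Un models_Un)
qed

lemma unweight_sat_part_hard_soft:
  "unweight (sat_part \<Pi> X) = unweight (sat_part (hard \<Pi>) X) \<union> unweight (sat_part (soft \<Pi>) X)"
  unfolding unweight_def sat_part_def hard_def soft_def by blast

lemma sat_part_eq_self: "models X (unweight \<Sigma>) \<Longrightarrow> sat_part \<Sigma> X = \<Sigma>"
  unfolding models_def unweight_def sat_part_def by force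

lemma valid_reducts_sat_part_Neg:
  assumes "\<forall>(w, F) \<in> \<Sigma>. \<exists>G. F = Neg G"
  shows "\<forall>F \<in> unweight (sat_part \<Sigma> X). \<forall>Y. sat Y (reduct X F)"
proof (intro ballI allI)
  fix F Y
  assume "F \<in> unweight (sat_part \<Sigma> X)"
  then obtain w where "(w, F) \<in> \<Sigma>" and "sat X F"
    unfolding unweight_def sat_part_def by force
  moreover from \<open>(w, F) \<in> \<Sigma>\<close> obtain G where "F = Neg G"
    using assms by blast
  ultimately have "reduct X F = Neg Bot"
    by (simp add: reduct_Neg_if_sat)
  then show "sat Y (reduct X F)"
    by (simp add: Neg_def)
qed

lemma stable_model_sat_part_iff_hard:
  assumes "\<forall>(w, F) \<in> soft \<Pi>. \<exists>G. F = Neg G"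
    and "models X (unweight (hard \<Pi>))"
  shows "stable_model X (unweight (sat_part \<Pi> X)) \<longleftrightarrow> stable_model X (unweight (hard \<Pi>))"
proof -
  have "unweight (sat_part \<Pi> X) = unweight (hard \<Pi>) \<union> unweight (sat_part (soft \<Pi>) X)"
    using unweight_sat_part_hard_soft sat_part_eq_self[OF assms(2)] by metis
  then show ?thesis
    using stable_model_Un_valid_reducts[OF valid_reducts_sat_part_Neg[OF assms(1)]] by simp
qed

theorem proposition1:
  fixes \<Pi> :: "('a::finite) lpmln"
  assumes "finite \<Pi>"
    and "\<forall>(w, F) \<in> soft \<Pi>. \<exists>G. F = Neg G"
  shows "SSM' \<Pi> = SM (unweight (hard \<Pi>))"
proof (rule set_eqI)
  fix X
  show "X \<in> SSM' \<Pi> \<longleftrightarrow> X \<in> SM (unweight (hard \<Pi>))"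
  proof (cases "models X (unweight (hard \<Pi>))")
    case True
    then show ?thesis
      by (simp add: SSM'_def SM_def stable_model_sat_part_iff_hard[OF assms(2)])
  next
    case False
    then show ?thesis
      by (auto simp: SSM'_def SM_def dest: stable_model_imp_models)
  qed
qed

end
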